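(* Let $R$ be a Noetherian integral domain. If every ideal of $R[X]$ is power stable, then $R$ is a field.
   Context: An ideal $I$ of the polynomial ring $R[X]$ over an integral domain $R$ is called power stable if $I^t\cap R = (I\cap R)^t$ for all integers $t\geq 1$. *)

theory Defs
  imports "HOL-Algebra.Ring_Divisibility" "HOL-Algebra.Polynomials" "HOL-Algebra.Ideal_Product"
begin

definition ideal_pow :: "('a, 'b) ring_scheme \<Rightarrow> 'a set \<Rightarrow> nat \<Rightarrow> 'a set" where
  "ideal_pow R I n = ((ideal_prod R I) ^^ n) (carrier R)"

definition contraction :: "('a, 'b) ring_scheme \<Rightarrow> 'a list set \<Rightarrow> 'a set" where
  "contraction R I = {a \<in> carrier R. ring.poly_of_const R a \<in> I}"

definition power_stable :: "('a, 'b) ring_scheme \<Rightarrow> 'a list set \<Rightarrow> bool" where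
  "power_stable R I \<longleftrightarrow>
     (\<forall>t::nat. t \<ge> 1 \<longrightarrow>
        contraction R (ideal_pow (univ_poly R (carrier R)) I t) = ideal_pow R (contraction R I) t)"

end

theory Submission
  imports Defs
begin

(* Let R be an integral domain that is not a field and a a nonzero nonunit of R.  The ideal
   I = (X^2 - a, aX) of R[X] is not power stable:
     - a^3 = (aX)^2 - X (X^2 - a)(aX) + a (X^2 - a)^2 lies in I^2, so a^3 is in I^2 \<inter> R;
     - every constant f (X^2 - a) + g aX lies in a^2 R, so (I \<inter> R)^2 is contained in a^4 R;
   and a^3 \<in> a^4 R forces a to be a unit.  Hence if all ideals of R[X] are power stable, R is a
   field. *)

lemma (in cring) ideal_prod_subset_PIdl:
  assumes pq: "p \<in> carrier R" "q \<in> carrier R" and JK: "J \<subseteq> PIdl p" "K \<subseteq> PIdl q"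
  shows "J \<cdot> K \<subseteq> PIdl (p \<otimes> q)"
proof
  fix s assume "s \<in> J \<cdot> K"
  then show "s \<in> PIdl (p \<otimes> q)"
  proof (induct s rule: ideal_prod.induct)
    case (prod i j)
    then have "i \<otimes> j \<in> PIdl p <#> PIdl q" using JK unfolding set_mult_def by blast
    then show ?case using cgenideal_prod[OF pq] by simp
  next
    case (sum s1 s2)
    then show ?case
      using cgenideal_ideal[OF m_closed[OF pq]] by (simp add: additive_subgroup.a_closed ideal.axioms(1))
  qed
qed

lemma (in cring) ideal_pow_subset_PIdl:
  assumes p: "p \<in> carrier R" and J: "J \<subseteq> PIdl p"
  shows "ideal_pow R J n \<subseteq> PIdl (p [^] n)"
proof (induction n)
  case 0
  have "carrier R \<subseteq> PIdl \<one>" unfolding cgenideal_def by (auto intro: r_one[symmetric])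
  then show ?case unfolding ideal_pow_def by simp
next
  case (Suc n)
  have "J \<cdot> ideal_pow R J n \<subseteq> PIdl (p \<otimes> p [^] n)"
    using ideal_prod_subset_PIdl[OF p nat_pow_closed[OF p] J Suc.IH] .
  then show ?case using p unfolding ideal_pow_def by (simp add: m_comm[OF p nat_pow_closed[OF p]])
qed

lemma (in domain) unit_if_mem_PIdl_mult:
  assumes b: "b \<in> carrier R" "b \<noteq> \<zero>" and c: "c \<in> carrier R" and mem: "b \<in> PIdl (b \<otimes> c)"
  shows "c \<in> Units R"
proof -
  obtain y where y: "y \<in> carrier R" "b = y \<otimes> (b \<otimes> c)" using mem unfolding cgenideal_def by blast
  have "b \<otimes> (c \<otimes> y) = b \<otimes> \<one>" using y b c by (simp add: m_ac)
  then have "c \<otimes> y = \<one>" using m_lcancel[OF b(2,1)] y c by simp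
  then show ?thesis using y(1) c m_comm[OF c y(1)] unfolding Units_def by auto
qed

lemma (in domain) nonzero_nonunit_if_not_field:
  assumes "\<not> field R"
  obtains a where "a \<in> carrier R" "a \<noteq> \<zero>" "a \<notin> Units R"
  using assms field_intro2[OF one_not_zero[symmetric]] by blast

locale poly_domain = domain R for R :: "('a, 'b) ring_scheme" (structure) +
  fixes P :: "'a list ring"
  defines P_def: "P \<equiv> carrier R [X]"

sublocale poly_domain \<subseteq> P: domain P
  unfolding P_def by (rule univ_poly_is_domain[OF carrier_is_subring])

sublocale poly_domain \<subseteq> C: ring_hom_ring R P poly_of_const
  using canonical_embedding_ring_hom[OF carrier_is_subring] unfolding P_def by simp

sublocale poly_domain \<subseteq> CT: ring_hom_ring P R const_term
proof -
  have "(\<lambda>p. eval p \<zero>) = const_term" by (rule ext) (simp add: const_term_def)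
  then show "ring_hom_ring P R const_term"
    using eval_ring_hom[OF carrier_is_subring zero_closed] unfolding P_def by simp
qed

context poly_domain
begin

lemma X_closed: "X \<in> carrier P"
  unfolding P_def by (rule var_closed(1)[OF carrier_is_subring])

lemma X_nonzero: "X \<noteq> \<zero>\<^bsub>P\<^esub>"
  by (simp add: P_def var_def univ_poly_zero)

lemma const_term_X: "const_term X = \<zero>"
  by (simp add: var_def const_term_def)

lemma const_term_const: "k \<in> carrier R \<Longrightarrow> const_term (poly_of_const k) = k"
  by (auto simp: poly_of_const_def const_term_def)

lemma X_dvd_if_const_term_zero:
  assumes p: "p \<in> carrier P" and p0: "const_term p = \<zero>"
  shows "\<exists>q \<in> carrier P. p = X \<otimes>\<^bsub>P\<^esub> q"
proof (cases "p = []")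
  case True
  then show ?thesis
    using X_closed P.r_null by (intro bexI[of _ "\<zero>\<^bsub>P\<^esub>"]) (auto simp: P_def univ_poly_zero)
next
  case False
  have "polynomial (carrier R) p" using p by (simp add: P_def univ_poly_carrier)
  then obtain q where q: "polynomial (carrier R) q" "q \<noteq> []" "p = q @ [\<zero>]"
    using const_term_zero[OF carrier_is_subring _ False p0] by blast
  have qc: "q \<in> carrier P" using q(1) by (simp add: P_def univ_poly_carrier)
  have "q \<otimes>\<^bsub>P\<^esub> X = p"
    using poly_mult_var[OF carrier_is_subring, of q] qc q(2,3) by (simp add: P_def)
  then show ?thesis using qc X_closed P.m_comm by metis
qed

lemma poly_decomp:
  assumes p: "p \<in> carrier P"
  shows "\<exists>q \<in> carrier P. p = poly_of_const (const_term p) \<oplus>\<^bsub>P\<^esub> X \<otimes>\<^bsub>P\<^esub> q"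
proof -
  have c: "poly_of_const (const_term p) \<in> carrier P" using p by simp
  have "const_term (p \<ominus>\<^bsub>P\<^esub> poly_of_const (const_term p)) = \<zero>"
    using p c by (simp add: a_minus_def const_term_const r_neg)
  then obtain q where q: "q \<in> carrier P" "p \<ominus>\<^bsub>P\<^esub> poly_of_const (const_term p) = X \<otimes>\<^bsub>P\<^esub> q"
    using X_dvd_if_const_term_zero p c by blast
  have "p = poly_of_const (const_term p) \<oplus>\<^bsub>P\<^esub> (p \<ominus>\<^bsub>P\<^esub> poly_of_const (const_term p))"
    using p c by algebra
  then show ?thesis using q by auto
qed

lemma const_dvd_X_mult:
  assumes a: "a \<in> carrier R" "a \<noteq> \<zero>" and pq: "p \<in> carrier P" "q \<in> carrier P"
    and eq: "poly_of_const a \<otimes>\<^bsub>P\<^esub> p = X \<otimes>\<^bsub>P\<^esub> q"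
  shows "\<exists>h \<in> carrier P. q = poly_of_const a \<otimes>\<^bsub>P\<^esub> h"
proof -
  have "a \<otimes> const_term p = \<zero>"
    using arg_cong[OF eq, of const_term] a pq X_closed by (simp add: const_term_const const_term_X)
  then have "const_term p = \<zero>" using a CT.hom_closed[OF pq(1)] integral by blast
  then obtain h where h: "h \<in> carrier P" "p = X \<otimes>\<^bsub>P\<^esub> h"
    using X_dvd_if_const_term_zero pq by blast
  have "X \<otimes>\<^bsub>P\<^esub> (poly_of_const a \<otimes>\<^bsub>P\<^esub> h) = X \<otimes>\<^bsub>P\<^esub> q"
    using eq h a X_closed P.m_lcomm by simp
  then have "q = poly_of_const a \<otimes>\<^bsub>P\<^esub> h"
    using P.m_lcancel[OF X_nonzero X_closed] h a pq by simp
  then show ?thesis using h by blast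
qed

text \<open>Rearranging gives x + a f = X (X f + a g); comparing constant terms yields x = -a f(0), and
  writing f = f(0) + X f' and cancelling X leaves a (f' - g) = X f, so a divides f and f(0).\<close>
lemma contraction_bound:
  assumes a: "a \<in> carrier R" "a \<noteq> \<zero>" and x: "x \<in> carrier R"
    and fg: "f \<in> carrier P" "g \<in> carrier P"
    and eq: "poly_of_const x = f \<otimes>\<^bsub>P\<^esub> (X \<otimes>\<^bsub>P\<^esub> X \<ominus>\<^bsub>P\<^esub> poly_of_const a)
                             \<oplus>\<^bsub>P\<^esub> g \<otimes>\<^bsub>P\<^esub> (poly_of_const a \<otimes>\<^bsub>P\<^esub> X)"
  shows "x \<in> PIdl (a \<otimes> a)"
proof -
  let ?C = poly_of_const
  define f0 where "f0 = const_term f"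
  have f0: "f0 \<in> carrier R" using fg by (simp add: f0_def)
  obtain f' where f': "f' \<in> carrier P" "f = ?C f0 \<oplus>\<^bsub>P\<^esub> X \<otimes>\<^bsub>P\<^esub> f'"
    using poly_decomp[OF fg(1)] unfolding f0_def by blast
  note closed = X_closed C.hom_closed[OF a(1)] C.hom_closed[OF x] C.hom_closed[OF f0] fg f'(1)
  have shifted: "?C x \<oplus>\<^bsub>P\<^esub> ?C a \<otimes>\<^bsub>P\<^esub> f = X \<otimes>\<^bsub>P\<^esub> (X \<otimes>\<^bsub>P\<^esub> f \<oplus>\<^bsub>P\<^esub> ?C a \<otimes>\<^bsub>P\<^esub> g)"
    unfolding eq using closed by algebra
  have x_f0_zero: "x \<oplus> a \<otimes> f0 = \<zero>"
    using arg_cong[OF shifted, of const_term] closed a x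
    by (simp add: f0_def const_term_X const_term_const)
  then have x_f0: "?C x \<oplus>\<^bsub>P\<^esub> ?C a \<otimes>\<^bsub>P\<^esub> ?C f0 = \<zero>\<^bsub>P\<^esub>"
    using a x f0 by (simp flip: C.hom_mult C.hom_add)
  have "?C x \<oplus>\<^bsub>P\<^esub> ?C a \<otimes>\<^bsub>P\<^esub> f = X \<otimes>\<^bsub>P\<^esub> (?C a \<otimes>\<^bsub>P\<^esub> f')"
  proof -
    have "?C x \<oplus>\<^bsub>P\<^esub> ?C a \<otimes>\<^bsub>P\<^esub> f
        = (?C x \<oplus>\<^bsub>P\<^esub> ?C a \<otimes>\<^bsub>P\<^esub> ?C f0) \<oplus>\<^bsub>P\<^esub> X \<otimes>\<^bsub>P\<^esub> (?C a \<otimes>\<^bsub>P\<^esub> f')"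
      unfolding f'(2) using closed by algebra
    then show ?thesis unfolding x_f0 using closed by simp
  qed
  then have "?C a \<otimes>\<^bsub>P\<^esub> f' = X \<otimes>\<^bsub>P\<^esub> f \<oplus>\<^bsub>P\<^esub> ?C a \<otimes>\<^bsub>P\<^esub> g"
    using shifted P.m_lcancel[OF X_nonzero] closed by simp
  then have "?C a \<otimes>\<^bsub>P\<^esub> (f' \<ominus>\<^bsub>P\<^esub> g) = X \<otimes>\<^bsub>P\<^esub> f"
    using closed by algebra
  then obtain h where h: "h \<in> carrier P" "f = ?C a \<otimes>\<^bsub>P\<^esub> h"
    using const_dvd_X_mult[OF a, of "f' \<ominus>\<^bsub>P\<^esub> g" f] closed by auto
  have "f0 = a \<otimes> const_term h" unfolding f0_def h(2) using a h(1) by (simp add: const_term_const)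
  moreover have "x = \<ominus> (a \<otimes> f0)" using sum_zero_eq_neg x_f0_zero x a f0 by blast
  ultimately have "x = (\<ominus> const_term h) \<otimes> (a \<otimes> a)"
    using a CT.hom_closed[OF h(1)] by algebra
  then show ?thesis using h(1) unfolding cgenideal_def by auto
qed

definition witness_ideal :: "'a \<Rightarrow> 'a list set" where
  "witness_ideal a = PIdl\<^bsub>P\<^esub> (X \<otimes>\<^bsub>P\<^esub> X \<ominus>\<^bsub>P\<^esub> poly_of_const a) <+>\<^bsub>P\<^esub> PIdl\<^bsub>P\<^esub> (poly_of_const a \<otimes>\<^bsub>P\<^esub> X)"

lemma witness_ideal_generators:
  assumes a: "a \<in> carrier R"
  shows "ideal (witness_ideal a) P"
    and "X \<otimes>\<^bsub>P\<^esub> X \<ominus>\<^bsub>P\<^esub> poly_of_const a \<in> witness_ideal a"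
    and "poly_of_const a \<otimes>\<^bsub>P\<^esub> X \<in> witness_ideal a"
proof -
  let ?u = "X \<otimes>\<^bsub>P\<^esub> X \<ominus>\<^bsub>P\<^esub> poly_of_const a" and ?v = "poly_of_const a \<otimes>\<^bsub>P\<^esub> X"
  have uv: "?u \<in> carrier P" "?v \<in> carrier P" using X_closed a by auto
  have ideals: "ideal (PIdl\<^bsub>P\<^esub> ?u) P" "ideal (PIdl\<^bsub>P\<^esub> ?v) P"
    using P.cgenideal_ideal uv by auto
  then show "ideal (witness_ideal a) P"
    unfolding witness_ideal_def by (rule P.add_ideals)
  have "?u \<oplus>\<^bsub>P\<^esub> \<zero>\<^bsub>P\<^esub> \<in> witness_ideal a" "\<zero>\<^bsub>P\<^esub> \<oplus>\<^bsub>P\<^esub> ?v \<in> witness_ideal a"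
    unfolding witness_ideal_def set_add_def'
    using P.cgenideal_self uv ideals[THEN ideal.axioms(1), THEN additive_subgroup.zero_closed]
    by blast+
  then show "?u \<in> witness_ideal a" "?v \<in> witness_ideal a" using uv by simp_all
qed

lemma contraction_witness_ideal:
  assumes a: "a \<in> carrier R" "a \<noteq> \<zero>"
  shows "contraction R (witness_ideal a) \<subseteq> PIdl (a \<otimes> a)"
proof
  fix x assume "x \<in> contraction R (witness_ideal a)"
  then have x: "x \<in> carrier R" "poly_of_const x \<in> witness_ideal a"
    unfolding contraction_def by auto
  then obtain f g where "f \<in> carrier P" "g \<in> carrier P"
    "poly_of_const x = f \<otimes>\<^bsub>P\<^esub> (X \<otimes>\<^bsub>P\<^esub> X \<ominus>\<^bsub>P\<^esub> poly_of_const a)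
                     \<oplus>\<^bsub>P\<^esub> g \<otimes>\<^bsub>P\<^esub> (poly_of_const a \<otimes>\<^bsub>P\<^esub> X)"
    unfolding witness_ideal_def set_add_def' cgenideal_def by blast
  then show "x \<in> PIdl (a \<otimes> a)" using contraction_bound[OF a x(1)] by blast
qed

text \<open>a^3 = (aX)^2 - X (X^2 - a) (aX) + a (X^2 - a)^2 lies in the contraction of its square.\<close>
lemma cube_in_contraction_square:
  assumes a: "a \<in> carrier R"
  shows "a \<otimes> a \<otimes> a \<in> contraction R (ideal_pow P (witness_ideal a) 2)"
proof -
  let ?I = "witness_ideal a" and ?C = poly_of_const
  let ?u = "X \<otimes>\<^bsub>P\<^esub> X \<ominus>\<^bsub>P\<^esub> ?C a" and ?v = "?C a \<otimes>\<^bsub>P\<^esub> X"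
  note I = witness_ideal_generators[OF a]
  have closed: "X \<in> carrier P" "?C a \<in> carrier P" using X_closed a by auto
  have square: "ideal_pow P ?I 2 = ?I \<cdot>\<^bsub>P\<^esub> ?I"
    unfolding ideal_pow_def by (simp add: numeral_2_eq_2 P.ideal_prod_one[OF I(1)])
  have "?C (a \<otimes> a \<otimes> a) = ?C a \<otimes>\<^bsub>P\<^esub> ?C a \<otimes>\<^bsub>P\<^esub> ?C a"
    using a by simp
  also have "\<dots> = ?v \<otimes>\<^bsub>P\<^esub> ?v \<oplus>\<^bsub>P\<^esub> (\<ominus>\<^bsub>P\<^esub> X \<otimes>\<^bsub>P\<^esub> ?u) \<otimes>\<^bsub>P\<^esub> ?v
                         \<oplus>\<^bsub>P\<^esub> (?C a \<otimes>\<^bsub>P\<^esub> ?u) \<otimes>\<^bsub>P\<^esub> ?u"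
    using closed by algebra
  also have "\<dots> \<in> ?I \<cdot>\<^bsub>P\<^esub> ?I"
    using closed ideal.I_l_closed[OF I(1,2)]
    by (intro ideal_prod.sum ideal_prod.prod I(2,3)) auto
  finally show ?thesis unfolding square contraction_def using a by simp
qed

end

lemma (in poly_domain) field_if_all_power_stable:
  assumes stable: "\<forall>I. ideal I P \<longrightarrow> power_stable R I"
  shows "field R"
proof (rule ccontr)
  assume "\<not> field R"
  then obtain a where a: "a \<in> carrier R" "a \<noteq> \<zero>" "a \<notin> Units R"
    by (rule nonzero_nonunit_if_not_field)
  let ?I = "witness_ideal a"
  have "contraction R (ideal_pow P ?I 2) = ideal_pow R (contraction R ?I) 2"
    using stable witness_ideal_generators(1)[OF a(1)] unfolding power_stable_def P_def by auto
  also have "\<dots> \<subseteq> PIdl ((a \<otimes> a) [^] (2::nat))"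
    using ideal_pow_subset_PIdl contraction_witness_ideal a by simp
  also have "(a \<otimes> a) [^] (2::nat) = (a \<otimes> a \<otimes> a) \<otimes> a"
    using a by (simp add: numeral_2_eq_2 m_ac)
  finally have "a \<otimes> a \<otimes> a \<in> PIdl ((a \<otimes> a \<otimes> a) \<otimes> a)"
    using cube_in_contraction_square[OF a(1)] by blast
  then have "a \<in> Units R"
    using unit_if_mem_PIdl_mult[of "a \<otimes> a \<otimes> a" a] a by (simp add: integral_iff)
  with a show False by blast
qed

theorem theorem3p14:
  fixes R :: "('a, 'b) ring_scheme"
  assumes "noetherian_domain R"
    and "\<forall>I. ideal I (univ_poly R (carrier R)) \<longrightarrow> power_stable R I"
  shows "field R"
proof -
  interpret poly_domain R "univ_poly R (carrier R)"
    using assms(1) by (simp add: noetherian_domain_def poly_domain_def)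
  show ?thesis using field_if_all_power_stable assms(2) by simp
qed

end
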